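(* Let $f\colon\underline I=I_1\times\cdots\times I_n\to\mathbb R$ be a convex and separately increasing function ($I_i$ intervals), and let $H$ be a finite-dimensional Hilbert space. Let $\underline x=(x_1,\dots,x_n)$ and $\underline y=(y_1,\dots,y_n)$ be abelian $n$-tuples of self-adjoint operators on $H$ with $\sigma(x_i),\sigma(y_i)\subseteq I_i$ for all $i$. If $x_i\le y_i$ for $i=1,\dots,n$, then $f(\underline x)\prec_w f(\underline y)$.
   Context: Separately increasing means increasing in each variable when the others are held fixed. An $n$-tuple is abelian if its entries commute; $f$ of an abelian tuple of self-adjoint operators is defined by joint functional calculus. For a self-adjoint operator $x$ on an $m$-dimensional Hilbert space, $x_{[1]}\ge\cdots\ge x_{[m]}$ are its eigenvalues counted with multiplicity in decreasing order, and $x\prec_w y$ means $\sum_{i=1}^k x_{[i]}\le\sum_{i=1}^k y_{[i]}$ for $k=1,\dots,m$. *)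

theory Defs
  imports "HOL-Analysis.Analysis" "Jordan_Normal_Form.Schur_Decomposition"
    "Jordan_Normal_Form.Spectral_Radius"
begin

text \<open>Operators on an m-dimensional complex Hilbert space are represented as m x m
complex matrices (H = C^m with its standard inner product).\<close>

definition self_adjoint :: "nat \<Rightarrow> complex mat \<Rightarrow> bool" where
  "self_adjoint m A \<longleftrightarrow> A \<in> carrier_mat m m \<and> mat_adjoint A = A"

definition unitary_mat :: "nat \<Rightarrow> complex mat \<Rightarrow> bool" where
  "unitary_mat m U \<longleftrightarrow> U \<in> carrier_mat m m \<and> U * mat_adjoint U = 1\<^sub>m m
      \<and> mat_adjoint U * U = 1\<^sub>m m"

definition loewner_le :: "nat \<Rightarrow> complex mat \<Rightarrow> complex mat \<Rightarrow> bool" where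
  "loewner_le m A B \<longleftrightarrow>
     (\<forall>v \<in> carrier_vec m. Re (conjugate v \<bullet> ((B - A) *\<^sub>v v)) \<ge> 0)"

definition abelian_tuple :: "('n \<Rightarrow> complex mat) \<Rightarrow> bool" where
  "abelian_tuple x \<longleftrightarrow> (\<forall>i j. x i * x j = x j * x i)"

definition real_diag_mat :: "nat \<Rightarrow> (nat \<Rightarrow> real) \<Rightarrow> complex mat" where
  "real_diag_mat m d = mat m m (\<lambda>(r, c). if r = c then complex_of_real (d r) else 0)"

text \<open>Joint functional calculus: if U simultaneously diagonalises the abelian tuple x,
  x_i = U diag(\<Lambda>_1 $ i, ..., \<Lambda>_m $ i) U^*, then
  f(x) = U diag(f(\<Lambda>_1), ..., f(\<Lambda>_m)) U^*.\<close>
definition joint_fc_rel :: "nat \<Rightarrow> (real ^ 'n \<Rightarrow> real) \<Rightarrow> ('n \<Rightarrow> complex mat) \<Rightarrow> complex mat \<Rightarrow> bool" where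
  "joint_fc_rel m f x z \<longleftrightarrow>
     (\<exists>U (\<Lambda> :: nat \<Rightarrow> real ^ 'n). unitary_mat m U \<and>
        (\<forall>i. x i = U * real_diag_mat m (\<lambda>k. \<Lambda> k $ i) * mat_adjoint U) \<and>
        z = U * real_diag_mat m (\<lambda>k. f (\<Lambda> k)) * mat_adjoint U)"

definition joint_fc :: "nat \<Rightarrow> (real ^ 'n \<Rightarrow> real) \<Rightarrow> ('n \<Rightarrow> complex mat) \<Rightarrow> complex mat" where
  "joint_fc m f x = (THE z. joint_fc_rel m f x z)"

definition eigs_desc :: "complex mat \<Rightarrow> real list" where
  "eigs_desc A = rev (sorted_list_of_multiset (image_mset Re (proots (char_poly A))))"

definition weak_majorized :: "nat \<Rightarrow> complex mat \<Rightarrow> complex mat \<Rightarrow> bool" where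
  "weak_majorized m A B \<longleftrightarrow>
     (\<forall>k \<in> {1..m}. (\<Sum>i<k. eigs_desc A ! i) \<le> (\<Sum>i<k. eigs_desc B ! i))"

definition sep_increasing_on :: "(real ^ 'n) set \<Rightarrow> (real ^ 'n \<Rightarrow> real) \<Rightarrow> bool" where
  "sep_increasing_on D f \<longleftrightarrow>
     (\<forall>v \<in> D. \<forall>w \<in> D. \<forall>i. (\<forall>j. j \<noteq> i \<longrightarrow> v $ j = w $ j) \<and> v $ i \<le> w $ i \<longrightarrow> f v \<le> f w)"

end

theory Submission
  imports Defs
begin

text \<open>Diagonalise both tuples simultaneously, \<open>x\<^sub>i = U diag(\<lambda>\<^sub>k\<^sub>i) U\<^sup>*\<close> and
  \<open>y\<^sub>i = V diag(\<gamma>\<^sub>l\<^sub>i) V\<^sup>*\<close>, and let \<open>P\<^sub>l\<^sub>k = |(V\<^sup>*U)\<^sub>l\<^sub>k|\<^sup>2\<close>, a doubly stochastic matrix.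
  Testing \<open>x\<^sub>i \<le> y\<^sub>i\<close> on the \<open>k\<close>-th column of \<open>U\<close> gives \<open>\<lambda>\<^sub>k \<le> \<Sum>\<^sub>l P\<^sub>l\<^sub>k \<gamma>\<^sub>l\<close>
  componentwise, so monotonicity and then convexity of \<open>f\<close> give
  \<open>f(\<lambda>\<^sub>k) \<le> \<Sum>\<^sub>l P\<^sub>l\<^sub>k f(\<gamma>\<^sub>l)\<close>. Summed over any \<open>K\<close> indices \<open>k\<close>, the right-hand sides give
  \<open>\<Sum>\<^sub>l w\<^sub>l f(\<gamma>\<^sub>l)\<close> with \<open>0 \<le> w\<^sub>l \<le> 1\<close> and \<open>\<Sum>\<^sub>l w\<^sub>l = K\<close>, which is at most the sum of
  the \<open>K\<close> largest eigenvalues \<open>f(\<gamma>\<^sub>l)\<close> of \<open>f(y)\<close>.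

  The simultaneous diagonalisation is built from common eigenvectors: a commuting family has
  one in every nonzero invariant subspace, obtained from a linear dependence among Krylov vectors
  \<open>A\<^sup>j v\<close> and a root of the corresponding polynomial.\<close>

section \<open>Matrix entries, adjoints and unitary matrices\<close>

lemma index_mult_mat_sum:
  assumes "A \<in> carrier_mat n k" "B \<in> carrier_mat k m" "i < n" "j < m"
  shows "(A * B) $$ (i,j) = (\<Sum>c<k. A $$ (i,c) * B $$ (c,j))"
  using assms by (auto simp: scalar_prod_def atLeast0LessThan intro!: sum.cong)

lemma index_mult_mat_vec_sum:
  assumes "A \<in> carrier_mat n k" "v \<in> carrier_vec k" "i < n"
  shows "(A *\<^sub>v v) $ i = (\<Sum>c<k. A $$ (i,c) * v $ c)"
  using assms by (auto simp: scalar_prod_def atLeast0LessThan intro!: sum.cong)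

lemma mat_adjoint_dim [simp]:
  "dim_row (mat_adjoint A) = dim_col A" "dim_col (mat_adjoint A) = dim_row A"
  by (auto simp: mat_adjoint_def)

lemma mat_adjoint_carrier [simp, intro]: "A \<in> carrier_mat n m \<Longrightarrow> mat_adjoint A \<in> carrier_mat m n"
  unfolding carrier_mat_def by simp

lemma index_mat_adjoint [simp]:
  assumes "i < dim_col A" "j < dim_row A"
  shows "mat_adjoint A $$ (i,j) = cnj (A $$ (j,i))"
  using assms by (simp add: mat_adjoint_def mat_of_rows_index conjugate_complex_def)

lemma mat_adjoint_adjoint [simp]: "mat_adjoint (mat_adjoint (A :: complex mat)) = A"
  by (rule eq_matI) simp_all

lemma mat_adjoint_mult:
  assumes A: "(A :: complex mat) \<in> carrier_mat n k" and B: "B \<in> carrier_mat k m"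
  shows "mat_adjoint (A * B) = mat_adjoint B * mat_adjoint A"
proof (rule eq_matI)
  fix i j assume "i < dim_row (mat_adjoint B * mat_adjoint A)" "j < dim_col (mat_adjoint B * mat_adjoint A)"
  hence i: "i < m" and j: "j < n" using A B by auto
  have "mat_adjoint (A * B) $$ (i,j) = cnj (\<Sum>c<k. A $$ (j,c) * B $$ (c,i))"
    using index_mult_mat_sum[OF A B j i] i j A B by simp
  also have "\<dots> = (\<Sum>c<k. mat_adjoint B $$ (i,c) * mat_adjoint A $$ (c,j))"
    unfolding cnj_sum using A B i j by (intro sum.cong) (auto simp: mult.commute)
  also have "\<dots> = (mat_adjoint B * mat_adjoint A) $$ (i,j)"
    using index_mult_mat_sum[OF mat_adjoint_carrier[OF B] mat_adjoint_carrier[OF A] i j] by simp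
  finally show "mat_adjoint (A * B) $$ (i,j) = (mat_adjoint B * mat_adjoint A) $$ (i,j)" .
qed (use A B in auto)

lemma unitary_matD:
  assumes "unitary_mat m U"
  shows "U \<in> carrier_mat m m" "mat_adjoint U \<in> carrier_mat m m"
    "U * mat_adjoint U = 1\<^sub>m m" "mat_adjoint U * U = 1\<^sub>m m"
  using assms unfolding unitary_mat_def by auto

lemma unitary_cancel_left:
  assumes U: "unitary_mat m U" and B: "B \<in> carrier_mat m k"
  shows "U * (mat_adjoint U * B) = B"
  using assoc_mult_mat[OF unitary_matD(1,2)[OF U] B, symmetric] unitary_matD(3)[OF U] B by simp

lemma unitary_adjoint_cancel_left:
  assumes U: "unitary_mat m U" and B: "B \<in> carrier_mat m k"
  shows "mat_adjoint U * (U * B) = B"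
  using assoc_mult_mat[OF unitary_matD(2,1)[OF U] B, symmetric] unitary_matD(4)[OF U] B by simp

lemma unitary_adjoint_mult:
  assumes V: "unitary_mat m V" and U: "unitary_mat m U"
  shows "unitary_mat m (mat_adjoint V * U)"
proof -
  note v = unitary_matD[OF V] and u = unitary_matD[OF U]
  have c: "mat_adjoint V * U \<in> carrier_mat m m" using v u by auto
  have adj: "mat_adjoint (mat_adjoint V * U) = mat_adjoint U * V"
    using mat_adjoint_mult[OF v(2) u(1)] by simp
  have "mat_adjoint U * V * (mat_adjoint V * U) = 1\<^sub>m m"
    using assoc_mult_mat[OF u(2) v(1) c] v u unitary_cancel_left[OF V u(1)] by simp
  moreover have "mat_adjoint V * U * (mat_adjoint U * V) = 1\<^sub>m m"
    using assoc_mult_mat[OF v(2) u(1) mult_carrier_mat[OF u(2) v(1)]] v u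
      unitary_cancel_left[OF U v(1)] by simp
  ultimately show ?thesis unfolding unitary_mat_def adj using c by simp
qed

lemma real_diag_mat_carrier [simp]: "real_diag_mat m d \<in> carrier_mat m m"
  and real_diag_mat_dim [simp]:
    "dim_row (real_diag_mat m d) = m" "dim_col (real_diag_mat m d) = m"
  by (auto simp: real_diag_mat_def)

lemma index_real_diag_mat [simp]:
  "i < m \<Longrightarrow> j < m \<Longrightarrow> real_diag_mat m d $$ (i,j) = (if i = j then complex_of_real (d i) else 0)"
  by (simp add: real_diag_mat_def)

lemma index_mult_real_diag_mat_right:
  assumes A: "A \<in> carrier_mat n m" and i: "i < n" and j: "j < m"
  shows "(A * real_diag_mat m d) $$ (i,j) = A $$ (i,j) * complex_of_real (d j)"
proof -
  have "(A * real_diag_mat m d) $$ (i,j) = (\<Sum>c<m. if c = j then A $$ (i,j) * complex_of_real (d j) else 0)"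
    unfolding index_mult_mat_sum[OF A real_diag_mat_carrier i j] using j by (intro sum.cong) auto
  thus ?thesis using j by simp
qed

lemma index_mult_real_diag_mat_left:
  assumes A: "A \<in> carrier_mat m n" and i: "i < m" and j: "j < n"
  shows "(real_diag_mat m d * A) $$ (i,j) = complex_of_real (d i) * A $$ (i,j)"
proof -
  have "(real_diag_mat m d * A) $$ (i,j) = (\<Sum>c<m. if c = i then complex_of_real (d i) * A $$ (i,j) else 0)"
    unfolding index_mult_mat_sum[OF real_diag_mat_carrier A i j] using i by (intro sum.cong) auto
  thus ?thesis using i by simp
qed

lemma unitary_conj_cancel:
  assumes U: "unitary_mat m U" and D: "D \<in> carrier_mat m m"
  shows "mat_adjoint U * (U * D * mat_adjoint U) * U = D"
  using unitary_matD[OF U] D unitary_adjoint_cancel_left[OF U D]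
  by (simp add: assoc_mult_mat[of _ m m _ m _ m] mult_carrier_mat[of _ m m _ m])

lemma unitary_conj_change_basis:
  assumes U: "unitary_mat m U" and V: "unitary_mat m V" and D: "D \<in> carrier_mat m m"
  shows "mat_adjoint U * (V * D * mat_adjoint V) * U
     = mat_adjoint (mat_adjoint V * U) * D * (mat_adjoint V * U)"
proof -
  note u = unitary_matD[OF U] and v = unitary_matD[OF V]
  have "mat_adjoint (mat_adjoint V * U) = mat_adjoint U * V"
    using mat_adjoint_mult[OF v(2) u(1)] by simp
  thus ?thesis
    using u v D by (simp add: assoc_mult_mat[of _ m m _ m _ m] mult_carrier_mat[of _ m m _ m])
qed


lemma quadratic_form_col:
  assumes A: "(A :: complex mat) \<in> carrier_mat m m" and U: "U \<in> carrier_mat m m" and k: "k < m"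
  shows "conjugate (col U k) \<bullet> (A *\<^sub>v col U k) = (mat_adjoint U * A * U) $$ (k,k)"
proof -
  have "(mat_adjoint U * A * U) $$ (k,k) = (\<Sum>c<m. mat_adjoint U $$ (k,c) * (A * U) $$ (c,k))"
    using assoc_mult_mat[OF mat_adjoint_carrier[OF U] A U]
      index_mult_mat_sum[OF mat_adjoint_carrier[OF U] mult_carrier_mat[OF A U] k k] by simp
  also have "\<dots> = conjugate (col U k) \<bullet> (A *\<^sub>v col U k)"
    unfolding scalar_prod_def using A U k
    by (auto simp: atLeast0LessThan conjugate_complex_def intro!: sum.cong)
  finally show ?thesis by simp
qed

lemma diag_entry_conj_real_diag:
  assumes W: "W \<in> carrier_mat m m" and k: "k < m"
  shows "(mat_adjoint W * real_diag_mat m g * W) $$ (k,k)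
    = complex_of_real (\<Sum>l<m. (cmod (W $$ (l,k)))\<^sup>2 * g l)"
proof -
  have "(mat_adjoint W * real_diag_mat m g * W) $$ (k,k)
      = (\<Sum>l<m. mat_adjoint W $$ (k,l) * (real_diag_mat m g * W) $$ (l,k))"
    using assoc_mult_mat[OF mat_adjoint_carrier[OF W] real_diag_mat_carrier W]
      index_mult_mat_sum[OF mat_adjoint_carrier[OF W] mult_carrier_mat[OF real_diag_mat_carrier W] k k]
    by simp
  also have "\<dots> = (\<Sum>l<m. complex_of_real ((cmod (W $$ (l,k)))\<^sup>2 * g l))"
  proof (intro sum.cong refl)
    fix l assume "l \<in> {..<m}"
    then have "mat_adjoint W $$ (k,l) * (real_diag_mat m g * W) $$ (l,k)
        = complex_of_real (g l) * (W $$ (l,k) * cnj (W $$ (l,k)))"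
      using W k index_mult_real_diag_mat_left[OF W, of l k g] by (simp add: algebra_simps)
    also have "\<dots> = complex_of_real ((cmod (W $$ (l,k)))\<^sup>2 * g l)"
      unfolding complex_norm_square[symmetric] by simp
    finally show "mat_adjoint W $$ (k,l) * (real_diag_mat m g * W) $$ (l,k)
        = complex_of_real ((cmod (W $$ (l,k)))\<^sup>2 * g l)" .
  qed
  finally show ?thesis by simp
qed

lemma unitary_col_norm_sum:
  assumes W: "unitary_mat m W" and k: "k < m"
  shows "(\<Sum>l<m. (cmod (W $$ (l,k)))\<^sup>2) = 1"
proof -
  note w = unitary_matD[OF W]
  have "complex_of_real (\<Sum>l<m. (cmod (W $$ (l,k)))\<^sup>2) = (\<Sum>l<m. mat_adjoint W $$ (k,l) * W $$ (l,k))"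
    unfolding of_real_sum using w k
    by (intro sum.cong refl) (use complex_norm_square[of "W $$ (_,k)"] in \<open>simp add: mult.commute\<close>)
  also have "\<dots> = (mat_adjoint W * W) $$ (k,k)" using index_mult_mat_sum[OF w(2) w(1) k k] by simp
  also have "\<dots> = 1" using w k by simp
  finally show ?thesis by (metis of_real_eq_1_iff)
qed

lemma unitary_row_norm_sum:
  assumes W: "unitary_mat m W" and l: "l < m"
  shows "(\<Sum>k<m. (cmod (W $$ (l,k)))\<^sup>2) = 1"
proof -
  note w = unitary_matD[OF W]
  have "complex_of_real (\<Sum>k<m. (cmod (W $$ (l,k)))\<^sup>2) = (\<Sum>k<m. W $$ (l,k) * mat_adjoint W $$ (k,l))"
    unfolding of_real_sum using w l by (intro sum.cong refl) (use complex_norm_square[of "W $$ (l,_)"] in simp)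
  also have "\<dots> = (W * mat_adjoint W) $$ (l,l)" using index_mult_mat_sum[OF w(1) w(2) l l] by simp
  also have "\<dots> = 1" using w l by simp
  finally show ?thesis by (metis of_real_eq_1_iff)
qed

section \<open>Spectral data of a unitarily diagonalised matrix\<close>

lemma char_poly_unitary_diag:
  assumes U: "unitary_mat m U"
  shows "char_poly (U * real_diag_mat m d * mat_adjoint U)
    = (\<Prod>a\<leftarrow>map (\<lambda>k. complex_of_real (d k)) [0..<m]. [:- a, 1:])"
proof -
  note u = unitary_matD[OF U]
  have sim: "similar_mat (U * real_diag_mat m d * mat_adjoint U) (real_diag_mat m d)"
    unfolding similar_mat_def similar_mat_wit_def Let_def
    by (rule exI[of _ U], rule exI[of _ "mat_adjoint U"]) (use u in auto)
  have "upper_triangular (real_diag_mat m d)" unfolding upper_triangular_def by simp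
  from char_poly_upper_triangular[OF real_diag_mat_carrier this]
  have "char_poly (real_diag_mat m d) = (\<Prod>a\<leftarrow>diag_mat (real_diag_mat m d). [:- a, 1:])" .
  moreover have "diag_mat (real_diag_mat m d) = map (\<lambda>k. complex_of_real (d k)) [0..<m]"
    unfolding diag_mat_def by simp
  ultimately show ?thesis unfolding char_poly_similar[OF sim] by (simp only:)
qed

lemma proots_prod_list_linear:
  "proots (\<Prod>a\<leftarrow>as. [:- a, 1:]) = mset (as :: complex list)"
proof -
  have "0 \<notin> set (map (\<lambda>a. [:- a, 1:]) as)" by auto
  from proots_prod_list[OF this] show ?thesis by (induction as) (auto simp: o_def)
qed

lemma eigs_desc_unitary_diag:
  assumes U: "unitary_mat m U"
  shows "eigs_desc (U * real_diag_mat m d * mat_adjoint U) = rev (sort (map d [0..<m]))"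
proof -
  have "image_mset Re (proots (char_poly (U * real_diag_mat m d * mat_adjoint U)))
      = mset (map Re (map (\<lambda>k. complex_of_real (d k)) [0..<m]))"
    unfolding char_poly_unitary_diag[OF U] proots_prod_list_linear mset_map ..
  also have "map Re (map (\<lambda>k. complex_of_real (d k)) [0..<m]) = map d [0..<m]" by simp
  finally show ?thesis unfolding eigs_desc_def by (simp only: sorted_list_of_multiset_mset)
qed

lemma spectrum_unitary_diag:
  assumes U: "unitary_mat m U" and k: "k < m"
  shows "complex_of_real (d k) \<in> spectrum (U * real_diag_mat m d * mat_adjoint U)"
proof -
  have A: "U * real_diag_mat m d * mat_adjoint U \<in> carrier_mat m m" using unitary_matD[OF U] by auto
  show ?thesis
    unfolding spectrum_root_char_poly[OF A] char_poly_unitary_diag[OF U] mem_Collect_eq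
    by (rule linear_poly_root) (use k in simp)
qed

lemma unitary_diag_entries_in_box:
  fixes \<Lambda> :: "nat \<Rightarrow> real ^ 'n"
  assumes U: "unitary_mat m U"
    and x: "\<And>i. x i = U * real_diag_mat m (\<lambda>k. \<Lambda> k $ i) * mat_adjoint U"
    and spec: "\<And>i. spectrum (x i) \<subseteq> complex_of_real ` I i" and k: "k < m"
  shows "\<forall>i. \<Lambda> k $ i \<in> I i"
proof
  fix i
  have "complex_of_real (\<Lambda> k $ i) \<in> complex_of_real ` I i"
    using spec[of i] spectrum_unitary_diag[OF U k, of "\<lambda>k. \<Lambda> k $ i"] unfolding x by blast
  then show "\<Lambda> k $ i \<in> I i" by auto
qed

section \<open>Joint functional calculus\<close>

lemma intertwiner_real_diag_fun:
  fixes \<Lambda> \<Gamma> :: "nat \<Rightarrow> real ^ 'n"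
  assumes W: "W \<in> carrier_mat m m"
    and intertw: "\<And>i. W * real_diag_mat m (\<lambda>k. \<Lambda> k $ i) = real_diag_mat m (\<lambda>k. \<Gamma> k $ i) * W"
  shows "W * real_diag_mat m (\<lambda>k. f (\<Lambda> k)) = real_diag_mat m (\<lambda>k. f (\<Gamma> k)) * W"
proof (rule eq_matI)
  fix k l assume "k < dim_row (real_diag_mat m (\<lambda>k. f (\<Gamma> k)) * W)"
    "l < dim_col (real_diag_mat m (\<lambda>k. f (\<Gamma> k)) * W)"
  hence k: "k < m" and l: "l < m" using W by auto
  have entry: "W $$ (k,l) * complex_of_real (\<Lambda> l $ i) = complex_of_real (\<Gamma> k $ i) * W $$ (k,l)" for i
    using arg_cong[OF intertw[of i], of "\<lambda>M. M $$ (k,l)"]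
    by (simp add: index_mult_real_diag_mat_right[OF W k l] index_mult_real_diag_mat_left[OF W k l])
  have "W $$ (k,l) * complex_of_real (f (\<Lambda> l)) = complex_of_real (f (\<Gamma> k)) * W $$ (k,l)"
  proof (cases "W $$ (k,l) = 0")
    case False
    then have "\<Lambda> l $ i = \<Gamma> k $ i" for i
      using entry[of i] by (simp add: mult.commute)
    then have "\<Lambda> l = \<Gamma> k" by (simp add: Finite_Cartesian_Product.vec_eq_iff)
    thus ?thesis by (simp add: mult.commute)
  qed simp
  thus "(W * real_diag_mat m (\<lambda>k. f (\<Lambda> k))) $$ (k,l) = (real_diag_mat m (\<lambda>k. f (\<Gamma> k)) * W) $$ (k,l)"
    by (simp add: index_mult_real_diag_mat_right[OF W k l] index_mult_real_diag_mat_left[OF W k l])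
qed (use W in auto)

lemma unitary_diag_fun_unique:
  fixes \<Lambda> \<Gamma> :: "nat \<Rightarrow> real ^ 'n"
  assumes U: "unitary_mat m U" and V: "unitary_mat m V"
    and eq: "\<And>i. U * real_diag_mat m (\<lambda>k. \<Lambda> k $ i) * mat_adjoint U
               = V * real_diag_mat m (\<lambda>k. \<Gamma> k $ i) * mat_adjoint V"
  shows "U * real_diag_mat m (\<lambda>k. f (\<Lambda> k)) * mat_adjoint U
       = V * real_diag_mat m (\<lambda>k. f (\<Gamma> k)) * mat_adjoint V"
proof -
  note u = unitary_matD[OF U] and v = unitary_matD[OF V]
  define W where "W = mat_adjoint V * U"
  have Wu: "unitary_mat m W" unfolding W_def by (rule unitary_adjoint_mult[OF V U])
  note w = unitary_matD[OF Wu]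
  have "W * real_diag_mat m (\<lambda>k. \<Lambda> k $ i) = real_diag_mat m (\<lambda>k. \<Gamma> k $ i) * W" for i
  proof -
    let ?D = "real_diag_mat m (\<lambda>k. \<Lambda> k $ i)" and ?E = "real_diag_mat m (\<lambda>k. \<Gamma> k $ i)"
    have "?D = mat_adjoint W * ?E * W"
      using unitary_conj_cancel[OF U, of ?D] unfolding eq W_def
      by (simp add: unitary_conj_change_basis[OF U V])
    then have "W * ?D = W * (mat_adjoint W * (?E * W))"
      using assoc_mult_mat[OF w(2) real_diag_mat_carrier w(1)] by simp
    thus ?thesis using unitary_cancel_left[OF Wu mult_carrier_mat[OF real_diag_mat_carrier w(1)]] by simp
  qed
  from intertwiner_real_diag_fun[OF w(1) this]
  have WF: "W * real_diag_mat m (\<lambda>k. f (\<Lambda> k)) = real_diag_mat m (\<lambda>k. f (\<Gamma> k)) * W" .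
  have "U = V * W" unfolding W_def using unitary_cancel_left[OF V u(1)] by simp
  moreover have "W * mat_adjoint U = mat_adjoint V * (U * mat_adjoint U)"
    unfolding W_def using assoc_mult_mat[OF v(2) u(1) u(2)] .
  then have "W * mat_adjoint U = mat_adjoint V" using u v by simp
  ultimately show ?thesis
    using u v w WF mat_adjoint_mult[OF v(1) w(1)]
    by (simp add: assoc_mult_mat[of _ m m _ m _ m] mult_carrier_mat[of _ m m _ m])
qed

lemma joint_fc_unitary_diag:
  fixes x :: "'n::finite \<Rightarrow> complex mat" and \<Lambda> :: "nat \<Rightarrow> real ^ 'n"
  assumes U: "unitary_mat m U"
    and x: "\<And>i. x i = U * real_diag_mat m (\<lambda>k. \<Lambda> k $ i) * mat_adjoint U"
  shows "joint_fc m f x = U * real_diag_mat m (\<lambda>k. f (\<Lambda> k)) * mat_adjoint U"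
  unfolding joint_fc_def
proof (rule the_equality)
  show "joint_fc_rel m f x (U * real_diag_mat m (\<lambda>k. f (\<Lambda> k)) * mat_adjoint U)"
    unfolding joint_fc_rel_def using U x by blast
next
  fix z assume "joint_fc_rel m f x z"
  then obtain V and \<Gamma> :: "nat \<Rightarrow> real ^ 'n" where V: "unitary_mat m V"
    and xV: "\<forall>i. x i = V * real_diag_mat m (\<lambda>k. \<Gamma> k $ i) * mat_adjoint V"
    and z: "z = V * real_diag_mat m (\<lambda>k. f (\<Gamma> k)) * mat_adjoint V"
    unfolding joint_fc_rel_def by blast
  show "z = U * real_diag_mat m (\<lambda>k. f (\<Lambda> k)) * mat_adjoint U"
    unfolding z by (rule unitary_diag_fun_unique[OF V U]) (use x xV in metis)
qed


section \<open>Simultaneous unitary diagonalisation\<close>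

lemma exists_nonzero_orthogonal_vec:
  fixes u :: "nat \<Rightarrow> complex vec"
  assumes k: "k < N" and u: "\<And>r. r < k \<Longrightarrow> u r \<in> carrier_vec N"
  shows "\<exists>v\<in>carrier_vec N. v \<noteq> 0\<^sub>v N \<and> (\<forall>r<k. u r \<bullet> v = 0)"
proof -
  define c where "c i = (if i < k then u i else 0\<^sub>v N)" for i
  define M where "M = mat\<^sub>r N N (\<lambda>i. if i = k then 0\<^sub>v N else c i)"
  have M: "M \<in> carrier_mat N N" unfolding M_def by auto
  have "det M = 0" unfolding M_def by (rule det_row_0[OF k]) (use u in \<open>auto simp: c_def\<close>)
  then obtain v where v: "v \<in> carrier_vec N" "v \<noteq> 0\<^sub>v N" "M *\<^sub>v v = 0\<^sub>v N"
    using det_0_iff_vec_prod_zero[OF M] by auto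
  have "u r \<bullet> v = 0" if r: "r < k" for r
  proof -
    have "(M *\<^sub>v v) $ r = row M r \<bullet> v" using r k M by simp
    also have "row M r = u r" unfolding M_def c_def using r k u[OF r] by simp
    finally show ?thesis using v(3) r k by simp
  qed
  thus ?thesis using v(1,2) by blast
qed

definition krylov_vec :: "complex mat \<Rightarrow> complex vec \<Rightarrow> nat \<Rightarrow> complex vec" where
  "krylov_vec A v j = ((\<lambda>u. A *\<^sub>v u) ^^ j) v"

lemma krylov_vec_0 [simp]: "krylov_vec A v 0 = v"
  and krylov_vec_Suc [simp]: "krylov_vec A v (Suc j) = A *\<^sub>v krylov_vec A v j"
  by (simp_all add: krylov_vec_def)

lemma krylov_vec_carrier [simp]:
  "A \<in> carrier_mat m m \<Longrightarrow> v \<in> carrier_vec m \<Longrightarrow> krylov_vec A v j \<in> carrier_vec m"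
  by (induction j) auto

text \<open>\<open>krylov_comb m A v b n\<close> is \<open>p(A) v\<close> for the polynomial \<open>p = (\<Sum>j<n. b j * X ^ j)\<close>.\<close>

definition krylov_comb ::
    "nat \<Rightarrow> complex mat \<Rightarrow> complex vec \<Rightarrow> (nat \<Rightarrow> complex) \<Rightarrow> nat \<Rightarrow> complex vec" where
  "krylov_comb m A v b n = Matrix.vec m (\<lambda>i. \<Sum>j<n. b j * krylov_vec A v j $ i)"

lemma krylov_comb_carrier [simp]: "krylov_comb m A v b n \<in> carrier_vec m"
  and krylov_comb_dim [simp]: "dim_vec (krylov_comb m A v b n) = m"
  by (simp_all add: krylov_comb_def)

lemma krylov_comb_Suc:
  assumes "A \<in> carrier_mat m m" "v \<in> carrier_vec m"
  shows "krylov_comb m A v b (Suc n) = krylov_comb m A v b n + b n \<cdot>\<^sub>v krylov_vec A v n"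
proof -
  have "dim_vec (krylov_vec A v n) = m" using carrier_vecD[OF krylov_vec_carrier[OF assms]] .
  then show ?thesis by (intro eq_vecI) (simp_all add: krylov_comb_def)
qed

lemma mult_krylov_comb:
  assumes A: "A \<in> carrier_mat m m" and v: "v \<in> carrier_vec m" and i: "i < m"
  shows "(A *\<^sub>v krylov_comb m A v b n) $ i = (\<Sum>j<n. b j * krylov_vec A v (Suc j) $ i)"
proof -
  have "(A *\<^sub>v krylov_comb m A v b n) $ i = (\<Sum>c<m. \<Sum>j<n. b j * (A $$ (i,c) * krylov_vec A v j $ c))"
    unfolding index_mult_mat_vec_sum[OF A krylov_comb_carrier i]
    by (simp add: krylov_comb_def sum_distrib_left mult.left_commute)
  also have "\<dots> = (\<Sum>j<n. b j * (\<Sum>c<m. A $$ (i,c) * krylov_vec A v j $ c))"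
    by (subst sum.swap) (simp add: sum_distrib_left)
  also have "\<dots> = (\<Sum>j<n. b j * krylov_vec A v (Suc j) $ i)"
    using index_mult_mat_vec_sum[OF A krylov_vec_carrier[OF A v] i] by simp
  finally show ?thesis .
qed

text \<open>Coefficientwise form of \<open>p = (X - \<mu>) q\<close> for a root \<open>\<mu>\<close> of \<open>p = (\<Sum>j\<le>n+1. c j * X ^ j)\<close>,
  with \<open>b\<close> the coefficients of \<open>q\<close>.\<close>

lemma coeffs_linear_factor:
  fixes c :: "nat \<Rightarrow> complex"
  assumes c: "c (Suc n) \<noteq> 0"
  obtains \<mu> b where "b n \<noteq> 0" "b (Suc n) = 0"
    "\<And>j. j < Suc (Suc n) \<Longrightarrow> c j = (if j = 0 then 0 else b (j - 1)) - \<mu> * b j"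
proof -
  define p where "p = Poly (map c [0..<Suc (Suc n)])"
  have cp: "coeff p j = (if j < Suc (Suc n) then c j else 0)" for j
    unfolding p_def by (simp add: nth_default_def del: upt_Suc)
  have "Suc n \<le> degree p" by (rule le_degree) (use c cp in simp)
  hence "\<not> constant (poly p)" by (simp add: constant_degree)
  then obtain \<mu> where "poly p \<mu> = 0" using fundamental_theorem_of_algebra by metis
  then obtain q where pq: "p = [:- \<mu>, 1:] * q" using poly_eq_0_iff_dvd by (metis dvdE)
  have "q \<noteq> 0" using pq c cp[of "Suc n"] by auto
  then have "degree p = Suc (degree q)" unfolding pq by (subst degree_mult_eq) auto
  moreover have "degree p \<le> Suc n" by (rule degree_le) (simp add: cp)
  ultimately have "coeff q (Suc n) = 0" by (simp add: coeff_eq_0)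
  moreover have cb: "c j = (if j = 0 then 0 else coeff q (j - 1)) - \<mu> * coeff q j"
    if "j < Suc (Suc n)" for j
    using cp[of j] that unfolding pq by (cases j) simp_all
  moreover have "coeff q n \<noteq> 0" using cb[of "Suc n"] calculation(1) c by simp
  ultimately show ?thesis using that by blast
qed

lemma krylov_comb_linear_factor:
  assumes A: "A \<in> carrier_mat m m" and v: "v \<in> carrier_vec m" and c: "c (Suc n) \<noteq> 0"
  obtains \<mu> b where "b n \<noteq> 0"
    "krylov_comb m A v c (Suc (Suc n))
       = A *\<^sub>v krylov_comb m A v b (Suc n) - \<mu> \<cdot>\<^sub>v krylov_comb m A v b (Suc n)"
proof -
  obtain \<mu> b where b: "b n \<noteq> 0" and b_top: "b (Suc n) = 0"
    and cb: "\<And>j. j < Suc (Suc n) \<Longrightarrow> c j = (if j = 0 then 0 else b (j - 1)) - \<mu> * b j"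
    using coeffs_linear_factor[of c n, OF c] by blast
  have "krylov_comb m A v c (Suc (Suc n))
      = A *\<^sub>v krylov_comb m A v b (Suc n) - \<mu> \<cdot>\<^sub>v krylov_comb m A v b (Suc n)"
  proof (rule eq_vecI)
    fix i assume "i < dim_vec (A *\<^sub>v krylov_comb m A v b (Suc n) - \<mu> \<cdot>\<^sub>v krylov_comb m A v b (Suc n))"
    hence i: "i < m" using A by simp
    let ?K = "\<lambda>j. krylov_vec A v j $ i"
    have "(\<Sum>j<Suc (Suc n). c j * ?K j)
        = (\<Sum>j<Suc (Suc n). (if j = 0 then 0 else b (j - 1)) * ?K j) - \<mu> * (\<Sum>j<Suc (Suc n). b j * ?K j)"
      by (simp add: cb algebra_simps sum_subtractf sum_distrib_left del: sum.lessThan_Suc)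
    also have "(\<Sum>j<Suc (Suc n). (if j = 0 then 0 else b (j - 1)) * ?K j) = (\<Sum>j<Suc n. b j * ?K (Suc j))"
      unfolding sum.lessThan_Suc_shift by simp
    also have "(\<Sum>j<Suc (Suc n). b j * ?K j) = (\<Sum>j<Suc n. b j * ?K j)" using b_top by simp
    finally show "krylov_comb m A v c (Suc (Suc n)) $ i
        = (A *\<^sub>v krylov_comb m A v b (Suc n) - \<mu> \<cdot>\<^sub>v krylov_comb m A v b (Suc n)) $ i"
      using i A mult_krylov_comb[OF A v i, of b "Suc n"]
      by (simp add: krylov_comb_def del: index_mult_mat_vec krylov_vec_Suc sum.lessThan_Suc)
  qed (use A in simp)
  with b show ?thesis by (rule that)
qed

lemma krylov_relation_eigenvector:
  assumes A: "A \<in> carrier_mat m m" and v: "v \<in> carrier_vec m" "v \<noteq> 0\<^sub>v m"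
  shows "\<exists>j\<le>n. c j \<noteq> 0 \<Longrightarrow> krylov_comb m A v c (Suc n) = 0\<^sub>v m \<Longrightarrow>
    \<exists>b k \<mu>. krylov_comb m A v b k \<noteq> 0\<^sub>v m \<and> A *\<^sub>v krylov_comb m A v b k = \<mu> \<cdot>\<^sub>v krylov_comb m A v b k"
proof (induction n arbitrary: c)
  case 0
  have "c 0 * v $ i = 0" if "i < m" for i
    using arg_cong[OF 0(2), of "\<lambda>w. w $ i"] that by (simp add: krylov_comb_def)
  then have "v = 0\<^sub>v m" using 0(1) v(1) by (intro eq_vecI) auto
  with v(2) show ?case by simp
next
  case (Suc n)
  show ?case
  proof (cases "c (Suc n) = 0")
    case True
    then have "\<exists>j\<le>n. c j \<noteq> 0" using Suc.prems(1) le_Suc_eq by blast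
    moreover have "krylov_comb m A v c (Suc (Suc n)) = krylov_comb m A v c (Suc n)"
      using True by (simp add: krylov_comb_def)
    ultimately show ?thesis using Suc.prems(2) Suc.IH by simp
  next
    case False
    then obtain \<mu> b where b: "b n \<noteq> 0"
      and fac: "krylov_comb m A v c (Suc (Suc n))
        = A *\<^sub>v krylov_comb m A v b (Suc n) - \<mu> \<cdot>\<^sub>v krylov_comb m A v b (Suc n)"
      by (rule krylov_comb_linear_factor[OF A v(1)])
    show ?thesis
    proof (cases "krylov_comb m A v b (Suc n) = 0\<^sub>v m")
      case True
      with b show ?thesis using Suc.IH by blast
    next
      case False
      let ?w = "krylov_comb m A v b (Suc n)"
      have z: "A *\<^sub>v ?w - \<mu> \<cdot>\<^sub>v ?w = 0\<^sub>v m" using fac Suc.prems(2) by simp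
      have "(A *\<^sub>v ?w) $ i = \<mu> * ?w $ i" if "i < m" for i
        using arg_cong[OF z, of "\<lambda>w. w $ i"] that by (simp del: index_mult_mat_vec)
      then have "A *\<^sub>v ?w = \<mu> \<cdot>\<^sub>v ?w" using A by (intro eq_vecI) auto
      with False show ?thesis by blast
    qed
  qed
qed

definition vec_subspace :: "nat \<Rightarrow> complex vec set \<Rightarrow> bool" where
  "vec_subspace m S \<longleftrightarrow> S \<subseteq> carrier_vec m \<and> 0\<^sub>v m \<in> S \<and> (\<forall>u\<in>S. \<forall>w\<in>S. u + w \<in> S)
     \<and> (\<forall>a. \<forall>u\<in>S. a \<cdot>\<^sub>v u \<in> S)"

lemma krylov_comb_in_invariant_subspace:
  assumes A: "A \<in> carrier_mat m m" and S: "vec_subspace m S"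
    and inv: "\<And>u. u \<in> S \<Longrightarrow> A *\<^sub>v u \<in> S" and vS: "v \<in> S"
  shows "krylov_comb m A v b n \<in> S"
proof (induction n)
  case 0
  have "krylov_comb m A v b 0 = 0\<^sub>v m" by (simp add: krylov_comb_def zero_vec_def)
  thus ?case using S unfolding vec_subspace_def by simp
next
  case (Suc n)
  have v: "v \<in> carrier_vec m" using vS S unfolding vec_subspace_def by auto
  have "krylov_vec A v n \<in> S" by (induction n) (use vS inv in auto)
  thus ?case using Suc S unfolding krylov_comb_Suc[OF A v] vec_subspace_def by simp
qed

lemma invariant_subspace_eigenvector:
  assumes A: "A \<in> carrier_mat m m" and S: "vec_subspace m S"
    and inv: "\<And>u. u \<in> S \<Longrightarrow> A *\<^sub>v u \<in> S" and vS: "v \<in> S" and v0: "v \<noteq> 0\<^sub>v m"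
  shows "\<exists>w\<in>S. w \<noteq> 0\<^sub>v m \<and> (\<exists>\<mu>. A *\<^sub>v w = \<mu> \<cdot>\<^sub>v w)"
proof -
  have v: "v \<in> carrier_vec m" using vS S unfolding vec_subspace_def by auto
  txt \<open>The \<open>m + 1\<close> vectors \<open>A\<^sup>j v\<close>, \<open>j \<le> m\<close>, are linearly dependent.\<close>
  define u where "u r = Matrix.vec (Suc m) (\<lambda>j. krylov_vec A v j $ r)" for r
  obtain c where c: "c \<in> carrier_vec (Suc m)" "c \<noteq> 0\<^sub>v (Suc m)" "\<forall>r<m. u r \<bullet> c = 0"
    using exists_nonzero_orthogonal_vec[of m "Suc m" u] unfolding u_def by auto
  have "\<exists>j\<le>m. c $ j \<noteq> 0"
  proof (rule ccontr)
    assume "\<not> ?thesis"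
    then have "c = 0\<^sub>v (Suc m)" using c(1) by (intro eq_vecI) auto
    with c(2) show False by simp
  qed
  moreover have "krylov_comb m A v (\<lambda>j. c $ j) (Suc m) = 0\<^sub>v m"
  proof (rule eq_vecI)
    fix i assume "i < dim_vec (0\<^sub>v m :: complex vec)"
    then have "i < m" by simp
    then show "krylov_comb m A v (\<lambda>j. c $ j) (Suc m) $ i = 0\<^sub>v m $ i"
      using c(1,3) unfolding u_def krylov_comb_def scalar_prod_def
      by (simp add: atLeast0LessThan mult.commute)
  qed simp
  ultimately obtain b k \<mu> where "krylov_comb m A v b k \<noteq> 0\<^sub>v m"
    "A *\<^sub>v krylov_comb m A v b k = \<mu> \<cdot>\<^sub>v krylov_comb m A v b k"
    using krylov_relation_eigenvector[OF A v v0] by blast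
  thus ?thesis using krylov_comb_in_invariant_subspace[OF A S inv vS] by blast
qed


lemma vec_subspace_eigenspace:
  assumes S: "vec_subspace m S" and A: "A \<in> carrier_mat m m"
  shows "vec_subspace m {u \<in> S. A *\<^sub>v u = \<mu> \<cdot>\<^sub>v u}"
proof -
  have Sc: "S \<subseteq> carrier_vec m" using S unfolding vec_subspace_def by auto
  have "A *\<^sub>v (u + w) = \<mu> \<cdot>\<^sub>v (u + w)"
    if "u \<in> S" "w \<in> S" "A *\<^sub>v u = \<mu> \<cdot>\<^sub>v u" "A *\<^sub>v w = \<mu> \<cdot>\<^sub>v w" for u w
  proof -
    have "u \<in> carrier_vec m" "w \<in> carrier_vec m" using that Sc by auto
    from mult_add_distrib_mat_vec[OF A this] smult_add_distrib_vec[OF this] show ?thesis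
      using that by simp
  qed
  moreover have "A *\<^sub>v (a \<cdot>\<^sub>v u) = \<mu> \<cdot>\<^sub>v (a \<cdot>\<^sub>v u)" if "u \<in> S" "A *\<^sub>v u = \<mu> \<cdot>\<^sub>v u" for a u
    using that Sc mult_mat_vec[OF A] by (auto simp: smult_smult_assoc mult.commute)
  moreover have "A *\<^sub>v 0\<^sub>v m = \<mu> \<cdot>\<^sub>v 0\<^sub>v m" using A by (intro eq_vecI) auto
  ultimately show ?thesis using S unfolding vec_subspace_def by auto
qed

lemma invariant_subspace_common_eigenvector:
  fixes x :: "'n \<Rightarrow> complex mat"
  assumes J: "finite J" and x: "\<And>i. x i \<in> carrier_mat m m" and comm: "\<And>i j. x i * x j = x j * x i"
  shows "vec_subspace m S \<Longrightarrow> (\<And>i u. u \<in> S \<Longrightarrow> x i *\<^sub>v u \<in> S) \<Longrightarrow> v \<in> S \<Longrightarrow> v \<noteq> 0\<^sub>v m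
    \<Longrightarrow> \<exists>w\<in>S. w \<noteq> 0\<^sub>v m \<and> (\<forall>i\<in>J. \<exists>\<mu>. x i *\<^sub>v w = \<mu> \<cdot>\<^sub>v w)"
  using J
proof (induction J arbitrary: S v rule: finite_induct)
  case (insert k J)
  obtain w1 \<mu> where w1: "w1 \<in> S" "w1 \<noteq> 0\<^sub>v m" "x k *\<^sub>v w1 = \<mu> \<cdot>\<^sub>v w1"
    using invariant_subspace_eigenvector[OF x insert.prems] by metis
  define S' where "S' = {u \<in> S. x k *\<^sub>v u = \<mu> \<cdot>\<^sub>v u}"
  have "x i *\<^sub>v u \<in> S'" if u: "u \<in> S'" for i u
  proof -
    have uc: "u \<in> carrier_vec m" using u insert.prems(1) unfolding S'_def vec_subspace_def by auto
    have "x k *\<^sub>v (x i *\<^sub>v u) = x i *\<^sub>v (x k *\<^sub>v u)"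
      using assoc_mult_mat_vec[OF x x uc] comm by metis
    also have "\<dots> = \<mu> \<cdot>\<^sub>v (x i *\<^sub>v u)" using u mult_mat_vec[OF x uc] unfolding S'_def by simp
    finally show ?thesis using insert.prems(2) u unfolding S'_def by simp
  qed
  with vec_subspace_eigenspace[OF insert.prems(1) x] obtain w
    where "w \<in> S'" "w \<noteq> 0\<^sub>v m" "\<forall>i\<in>J. \<exists>\<mu>. x i *\<^sub>v w = \<mu> \<cdot>\<^sub>v w"
    using insert.IH[of S' w1] w1 unfolding S'_def by blast
  thus ?case unfolding S'_def by auto
qed auto

lemma conjugate_scalar_prod_swap:
  fixes u w :: "complex vec"
  assumes "u \<in> carrier_vec m" "w \<in> carrier_vec m"
  shows "conjugate u \<bullet> w = cnj (conjugate w \<bullet> u)"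
  using assms by (simp add: scalar_prod_def cnj_sum conjugate_complex_def mult.commute)

lemma self_adjoint_scalar_prod_swap:
  fixes u w :: "complex vec"
  assumes H: "self_adjoint m H" and u: "u \<in> carrier_vec m" and w: "w \<in> carrier_vec m"
  shows "conjugate u \<bullet> (H *\<^sub>v w) = conjugate (H *\<^sub>v u) \<bullet> w"
proof -
  have Hc: "H \<in> carrier_mat m m" using H unfolding self_adjoint_def by simp
  have Hr: "cnj (H $$ (c,r)) = H $$ (r,c)" if "r < m" "c < m" for r c
    using H that index_mat_adjoint[of r H c] unfolding self_adjoint_def by auto
  have "conjugate u \<bullet> (H *\<^sub>v w) = (\<Sum>r<m. cnj (u $ r) * (\<Sum>c<m. H $$ (r,c) * w $ c))"
    unfolding scalar_prod_def using Hc u w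
    by (simp add: atLeast0LessThan index_mult_mat_vec_sum[OF Hc w] del: index_mult_mat_vec)
  also have "\<dots> = (\<Sum>c<m. \<Sum>r<m. cnj (u $ r) * H $$ (r,c) * w $ c)"
    by (subst sum.swap) (simp add: sum_distrib_left mult.assoc)
  also have "\<dots> = (\<Sum>c<m. cnj (\<Sum>r<m. H $$ (c,r) * u $ r) * w $ c)"
    by (intro sum.cong refl) (simp add: cnj_sum sum_distrib_left sum_distrib_right Hr ac_simps)
  also have "\<dots> = conjugate (H *\<^sub>v u) \<bullet> w"
    unfolding scalar_prod_def using Hc u w
    by (simp add: atLeast0LessThan index_mult_mat_vec_sum[OF Hc u] del: index_mult_mat_vec)
  finally show ?thesis .
qed

definition orth_complement :: "nat \<Rightarrow> complex vec list \<Rightarrow> complex vec set" where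
  "orth_complement m vs = {w \<in> carrier_vec m. \<forall>u\<in>set vs. conjugate u \<bullet> w = 0}"

lemma vec_subspace_orth_complement:
  assumes vs: "set vs \<subseteq> carrier_vec m"
  shows "vec_subspace m (orth_complement m vs)"
proof -
  have "conjugate u \<bullet> (v + w) = conjugate u \<bullet> v + conjugate u \<bullet> w"
    if "u \<in> set vs" "v \<in> carrier_vec m" "w \<in> carrier_vec m" for u v w :: "complex vec"
    using that vs scalar_prod_add_distrib[of "conjugate u" m v w] by auto
  moreover have "conjugate u \<bullet> (a \<cdot>\<^sub>v v) = a * (conjugate u \<bullet> v)"
    if "u \<in> set vs" "v \<in> carrier_vec m" for u v :: "complex vec" and a
    using that vs scalar_prod_smult_distrib[of "conjugate u" m v] by auto
  moreover have "conjugate u \<bullet> 0\<^sub>v m = 0" if "u \<in> set vs" for u :: "complex vec"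
    using that vs by auto
  ultimately show ?thesis unfolding vec_subspace_def orth_complement_def by auto
qed

lemma self_adjoint_orth_complement_invariant:
  assumes A: "self_adjoint m A" and vs: "set vs \<subseteq> carrier_vec m"
    and ev: "\<forall>u\<in>set vs. \<exists>\<mu>. A *\<^sub>v u = \<mu> \<cdot>\<^sub>v u" and w: "w \<in> orth_complement m vs"
  shows "A *\<^sub>v w \<in> orth_complement m vs"
proof -
  have Ac: "A \<in> carrier_mat m m" using A unfolding self_adjoint_def by simp
  have wc: "w \<in> carrier_vec m" using w unfolding orth_complement_def by simp
  have "conjugate u \<bullet> (A *\<^sub>v w) = 0" if u: "u \<in> set vs" for u
  proof -
    obtain \<mu> where \<mu>: "A *\<^sub>v u = \<mu> \<cdot>\<^sub>v u" using ev u by blast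
    have uc: "u \<in> carrier_vec m" using vs u by auto
    have "conjugate u \<bullet> (A *\<^sub>v w) = conjugate (\<mu> \<cdot>\<^sub>v u) \<bullet> w"
      using self_adjoint_scalar_prod_swap[OF A uc wc] \<mu> by simp
    also have "\<dots> = conjugate \<mu> * (conjugate u \<bullet> w)"
      unfolding conjugate_smult_vec using uc wc by simp
    finally show ?thesis using w u unfolding orth_complement_def by simp
  qed
  thus ?thesis using Ac wc unfolding orth_complement_def by simp
qed

definition orthonormal_list :: "nat \<Rightarrow> complex vec list \<Rightarrow> bool" where
  "orthonormal_list m vs \<longleftrightarrow> set vs \<subseteq> carrier_vec m \<and>
     (\<forall>a<length vs. \<forall>b<length vs. conjugate (vs ! a) \<bullet> vs ! b = (if a = b then 1 else 0))"

lemma orthonormal_list_snoc: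
  fixes w :: "complex vec"
  assumes vs: "orthonormal_list m vs" and w: "w \<in> orth_complement m vs"
    and w1: "conjugate w \<bullet> w = 1"
  shows "orthonormal_list m (vs @ [w])"
proof -
  have wc: "w \<in> carrier_vec m" and vsc: "set vs \<subseteq> carrier_vec m"
    using w vs unfolding orth_complement_def orthonormal_list_def by auto
  have "conjugate (vs ! a) \<bullet> w = 0" if "a < length vs" for a
    using w that unfolding orth_complement_def by auto
  moreover have "conjugate w \<bullet> vs ! a = 0" if "a < length vs" for a
    using conjugate_scalar_prod_swap[OF wc, of "vs ! a"] calculation[OF that] vsc nth_mem[OF that]
    by auto
  ultimately show ?thesis
    using vs w1 wc unfolding orthonormal_list_def
    by (auto simp: nth_append less_Suc_eq)
qed

lemma normalize_vec:
  fixes w :: "complex vec"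
  assumes w: "w \<in> carrier_vec m" and w0: "w \<noteq> 0\<^sub>v m"
  obtains c :: complex where "conjugate (c \<cdot>\<^sub>v w) \<bullet> (c \<cdot>\<^sub>v w) = 1"
proof -
  have "w \<bullet>c w > 0" using w w0 by (subst conjugate_square_greater_0_vec)
  then have "conjugate w \<bullet> w > 0" using conjugate_vec_sprod_comm[OF w w] by simp
  then have "Re (conjugate w \<bullet> w) > 0" "Im (conjugate w \<bullet> w) = 0"
    by (simp_all add: less_complex_def)
  then obtain s where s: "s > 0" "conjugate w \<bullet> w = complex_of_real s"
    using complex_eq_iff by force
  define c where "c = complex_of_real (1 / sqrt s)"
  have "conjugate (c \<cdot>\<^sub>v w) \<bullet> (c \<cdot>\<^sub>v w) = cnj c * c * (conjugate w \<bullet> w)"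
    unfolding conjugate_smult_vec
    using smult_scalar_prod_distrib[OF carrier_vec_conjugate[OF w] smult_carrier_vec[THEN iffD2, OF w]]
      scalar_prod_smult_distrib[OF carrier_vec_conjugate[OF w] w] by (simp add: mult.assoc)
  also have "\<dots> = 1" unfolding c_def s(2) using s(1) by (simp flip: of_real_mult)
  finally show ?thesis by (rule that)
qed

lemma orthonormal_common_eigenvectors:
  fixes x :: "'n::finite \<Rightarrow> complex mat"
  assumes sa: "\<And>i. self_adjoint m (x i)" and ab: "abelian_tuple x"
  shows "k \<le> m \<Longrightarrow> \<exists>vs. length vs = k \<and> orthonormal_list m vs
    \<and> (\<forall>u\<in>set vs. \<forall>i. \<exists>\<mu>. x i *\<^sub>v u = \<mu> \<cdot>\<^sub>v u)"
proof (induction k)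
  case 0
  show ?case by (rule exI[of _ "[]"]) (simp add: orthonormal_list_def)
next
  case (Suc k)
  have xc: "x i \<in> carrier_mat m m" for i using sa unfolding self_adjoint_def by auto
  have comm: "x i * x j = x j * x i" for i j using ab unfolding abelian_tuple_def by auto
  from Suc obtain vs where len: "length vs = k" and on: "orthonormal_list m vs"
    and ev: "\<forall>u\<in>set vs. \<forall>i. \<exists>\<mu>. x i *\<^sub>v u = \<mu> \<cdot>\<^sub>v u" by auto
  have vsc: "set vs \<subseteq> carrier_vec m" using on unfolding orthonormal_list_def by simp
  let ?S = "orth_complement m vs"
  note S = vec_subspace_orth_complement[OF vsc]
  have inv: "x i *\<^sub>v u \<in> ?S" if "u \<in> ?S" for i u
    using self_adjoint_orth_complement_invariant[OF sa vsc] ev that by blast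
  obtain v where "v \<in> carrier_vec m" "v \<noteq> 0\<^sub>v m" "\<forall>r<k. conjugate (vs ! r) \<bullet> v = 0"
  proof -
    have "conjugate (vs ! r) \<in> carrier_vec m" if "r < k" for r
      using vsc len that by (metis carrier_vec_conjugate nth_mem subsetD)
    with exists_nonzero_orthogonal_vec[of k m "\<lambda>r. conjugate (vs ! r)"] Suc.prems
    show ?thesis using that by auto
  qed
  then have v: "v \<in> ?S" "v \<noteq> 0\<^sub>v m"
    unfolding orth_complement_def using len by (auto simp: in_set_conv_nth)
  obtain w where w: "w \<in> ?S" "w \<noteq> 0\<^sub>v m" "\<forall>i. \<exists>\<mu>. x i *\<^sub>v w = \<mu> \<cdot>\<^sub>v w"
    using invariant_subspace_common_eigenvector[of UNIV x, OF finite_class.finite_UNIV xc comm S inv v]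
    by auto
  have wc: "w \<in> carrier_vec m" using w(1) unfolding orth_complement_def by simp
  obtain c where c: "conjugate (c \<cdot>\<^sub>v w) \<bullet> (c \<cdot>\<^sub>v w) = 1" using normalize_vec[OF wc w(2)] by blast
  have "c \<cdot>\<^sub>v w \<in> ?S" using S w(1) unfolding vec_subspace_def by simp
  moreover have "\<exists>\<mu>. x i *\<^sub>v (c \<cdot>\<^sub>v w) = \<mu> \<cdot>\<^sub>v (c \<cdot>\<^sub>v w)" for i
    using w(3) mult_mat_vec[OF xc wc] by (metis smult_smult_assoc mult.commute)
  ultimately show ?case
    using orthonormal_list_snoc[OF on _ c] ev len by (intro exI[of _ "vs @ [c \<cdot>\<^sub>v w]"]) auto
qed


lemma unitary_mat_of_cols:
  assumes on: "orthonormal_list m vs" and len: "length vs = m"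
  shows "unitary_mat m (mat_of_cols m vs)"
proof -
  let ?U = "mat_of_cols m vs"
  have vc: "vs ! a \<in> carrier_vec m" if "a < m" for a
    using on that len nth_mem unfolding orthonormal_list_def by blast
  have Uc: "?U \<in> carrier_mat m m" using len by auto
  have "mat_adjoint ?U * ?U = 1\<^sub>m m"
  proof (rule eq_matI)
    fix a b assume "a < dim_row (1\<^sub>m m :: complex mat)" "b < dim_col (1\<^sub>m m :: complex mat)"
    hence a: "a < m" and b: "b < m" by auto
    have "(mat_adjoint ?U * ?U) $$ (a,b) = (\<Sum>r<m. conjugate (vs ! a) $ r * vs ! b $ r)"
      unfolding index_mult_mat_sum[OF mat_adjoint_carrier[OF Uc] Uc a b]
      using Uc a b vc[OF a] len by (intro sum.cong refl) (simp add: mat_of_cols_index)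
    also have "\<dots> = conjugate (vs ! a) \<bullet> vs ! b"
      unfolding scalar_prod_def using vc[OF b] by (simp add: atLeast0LessThan)
    also have "\<dots> = (1\<^sub>m m :: complex mat) $$ (a,b)"
      using on a b len unfolding orthonormal_list_def by simp
    finally show "(mat_adjoint ?U * ?U) $$ (a,b) = (1\<^sub>m m :: complex mat) $$ (a,b)" .
  qed (use Uc in auto)
  moreover from mat_mult_left_right_inverse[OF mat_adjoint_carrier[OF Uc] Uc this]
  have "?U * mat_adjoint ?U = 1\<^sub>m m" .
  ultimately show ?thesis unfolding unitary_mat_def using Uc by simp
qed

lemma self_adjoint_eigenvalue_real:
  fixes u :: "complex vec"
  assumes A: "self_adjoint m A" and u: "u \<in> carrier_vec m" and u1: "conjugate u \<bullet> u = 1"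
    and ev: "A *\<^sub>v u = \<mu> \<cdot>\<^sub>v u"
  shows "complex_of_real (Re \<mu>) = \<mu>"
proof -
  have Ac: "A \<in> carrier_mat m m" using A unfolding self_adjoint_def by simp
  have \<mu>: "\<mu> = conjugate u \<bullet> (A *\<^sub>v u)" using ev u u1 by simp
  also have "\<dots> = cnj (conjugate u \<bullet> (A *\<^sub>v u))"
    using self_adjoint_scalar_prod_swap[OF A u u]
      conjugate_scalar_prod_swap[OF mult_mat_vec_carrier[OF Ac u] u] by simp
  finally have "cnj \<mu> = \<mu>" using \<mu> by simp
  thus ?thesis by (simp add: complex_eq_iff)
qed

lemma unitary_eigenbasis_diag:
  assumes A: "A \<in> carrier_mat m m" and U: "unitary_mat m U"
    and ev: "\<And>a. a < m \<Longrightarrow> A *\<^sub>v col U a = complex_of_real (d a) \<cdot>\<^sub>v col U a"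
  shows "A = U * real_diag_mat m d * mat_adjoint U"
proof -
  note u = unitary_matD[OF U]
  have AU: "A * U = U * real_diag_mat m d"
  proof (rule eq_matI)
    fix r a assume "r < dim_row (U * real_diag_mat m d)" "a < dim_col (U * real_diag_mat m d)"
    hence r: "r < m" and a: "a < m" using u by auto
    have "(A * U) $$ (r,a) = (A *\<^sub>v col U a) $ r" using A u r a by simp
    also have "\<dots> = (U * real_diag_mat m d) $$ (r,a)"
      unfolding ev[OF a] index_mult_real_diag_mat_right[OF u(1) r a] using u r a by (simp add: mult.commute)
    finally show "(A * U) $$ (r,a) = (U * real_diag_mat m d) $$ (r,a)" .
  qed (use A u in auto)
  have "A = A * (U * mat_adjoint U)" using u A by simp
  also have "\<dots> = A * U * mat_adjoint U" using assoc_mult_mat[OF A u(1) u(2)] by simp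
  finally show ?thesis unfolding AU .
qed

theorem simultaneous_unitary_diagonalization:
  fixes x :: "'n::finite \<Rightarrow> complex mat"
  assumes sa: "\<And>i. self_adjoint m (x i)" and ab: "abelian_tuple x"
  obtains U and \<Lambda> :: "nat \<Rightarrow> real ^ 'n"
  where "unitary_mat m U" "\<And>i. x i = U * real_diag_mat m (\<lambda>k. \<Lambda> k $ i) * mat_adjoint U"
proof -
  obtain vs where len: "length vs = m" and on: "orthonormal_list m vs"
    and ev: "\<forall>u\<in>set vs. \<forall>i. \<exists>\<mu>. x i *\<^sub>v u = \<mu> \<cdot>\<^sub>v u"
    using orthonormal_common_eigenvectors[OF sa ab order.refl] by blast
  have vc: "vs ! a \<in> carrier_vec m" and v1: "conjugate (vs ! a) \<bullet> vs ! a = 1" if "a < m" for a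
    using on that len nth_mem unfolding orthonormal_list_def by auto
  define \<mu> where "\<mu> i a = (SOME \<mu>. x i *\<^sub>v vs ! a = \<mu> \<cdot>\<^sub>v vs ! a)" for i a
  have \<mu>: "x i *\<^sub>v vs ! a = \<mu> i a \<cdot>\<^sub>v vs ! a" if "a < m" for i a
    unfolding \<mu>_def using ev that len nth_mem by (metis (mono_tags, lifting) someI_ex)
  define \<Lambda> :: "nat \<Rightarrow> real ^ 'n" where "\<Lambda> a = (\<chi> i. Re (\<mu> i a))" for a
  have \<Lambda>: "complex_of_real (\<Lambda> a $ i) = \<mu> i a" if "a < m" for a i
    unfolding \<Lambda>_def using self_adjoint_eigenvalue_real[OF sa vc v1 \<mu>] that by simp
  define U where "U = mat_of_cols m vs"
  have U: "unitary_mat m U" unfolding U_def by (rule unitary_mat_of_cols[OF on len])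
  have "col U a = vs ! a" if "a < m" for a unfolding U_def using that len vc by simp
  then have "x i = U * real_diag_mat m (\<lambda>k. \<Lambda> k $ i) * mat_adjoint U" for i
    using sa[of i] \<mu> \<Lambda> unfolding self_adjoint_def by (intro unitary_eigenbasis_diag[OF _ U]) auto
  with U show ?thesis by (rule that)
qed

section \<open>Weak majorisation\<close>

definition sum_largest :: "nat \<Rightarrow> (nat \<Rightarrow> real) \<Rightarrow> nat \<Rightarrow> real" where
  "sum_largest m a K = (\<Sum>i<K. rev (sort (map a [0..<m])) ! i)"

lemma weak_majorized_unitary_diag:
  assumes U: "unitary_mat m U" and V: "unitary_mat m V"
    and le: "\<And>K. K \<le> m \<Longrightarrow> sum_largest m a K \<le> sum_largest m b K"
  shows "weak_majorized m (U * real_diag_mat m a * mat_adjoint U) (V * real_diag_mat m b * mat_adjoint V)"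
  unfolding weak_majorized_def eigs_desc_unitary_diag[OF U] eigs_desc_unitary_diag[OF V]
  using le unfolding sum_largest_def by auto

lemma sum_largest_eq_sum_subset:
  assumes K: "K \<le> m"
  obtains S where "S \<subseteq> {..<m}" "card S = K" "sum_largest m a K = (\<Sum>k\<in>S. a k)"
proof -
  have "mset (rev (sort (map a [0..<m]))) = mset (map a [0..<m])" by simp
  then obtain p where p: "p permutes {..<length (map a [0..<m])}"
    "permute_list p (map a [0..<m]) = rev (sort (map a [0..<m]))"
    by (rule mset_eq_permutation)
  have pm: "p permutes {..<m}" using p(1) by simp
  have pin: "p i < m" if "i < m" for i using permutes_in_image[OF pm] that by simp
  have nth: "rev (sort (map a [0..<m])) ! i = a (p i)" if i: "i < m" for i
    unfolding p(2)[symmetric] using permute_list_nth[OF p(1)] i pin[OF i] by simp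
  have inj: "inj_on p {..<K}" using permutes_inj[OF pm] by (simp add: inj_on_def inj_def)
  show ?thesis
  proof (rule that)
    show "p ` {..<K} \<subseteq> {..<m}" using pin K by auto
    show "card (p ` {..<K}) = K" using card_image[OF inj] by simp
    have "(\<Sum>k\<in>p ` {..<K}. a k) = (\<Sum>i<K. a (p i))" using sum.reindex[OF inj, of a] by simp
    also have "\<dots> = sum_largest m a K" unfolding sum_largest_def using nth K by (intro sum.cong) auto
    finally show "sum_largest m a K = (\<Sum>k\<in>p ` {..<K}. a k)" by simp
  qed
qed

lemma sum_excess_over_kth_largest:
  fixes b :: "nat \<Rightarrow> real"
  assumes K: "0 < K" "K \<le> m"
  defines "c \<equiv> rev (sort (map b [0..<m])) ! (K - 1)"
  shows "(\<Sum>l<m. max (b l - c) 0) = sum_largest m b K - real K * c"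
proof -
  define ys where "ys = rev (sort (map b [0..<m]))"
  define g where "g t = max (t - c) 0" for t :: real
  have mono: "ys ! j \<le> ys ! i" if "i \<le> j" "j < m" for i j
  proof -
    have "sort (map b [0..<m]) ! (m - Suc j) \<le> sort (map b [0..<m]) ! (m - Suc i)"
      by (rule sorted_nth_mono) (use that in auto)
    thus ?thesis unfolding ys_def using that by (simp add: rev_nth)
  qed
  have "mset (map b [0..<m]) = mset ys" unfolding ys_def by simp
  then have "sum_list (map g (map b [0..<m])) = sum_list (map g ys)"
    by (metis mset_map sum_mset_sum_list)
  then have "(\<Sum>l<m. g (b l)) = sum_list (map g ys)"
    by (simp add: sum_list_distinct_conv_sum_set atLeast0LessThan)
  also have "\<dots> = (\<Sum>i<m. g (ys ! i))"
    by (simp add: sum_list_sum_nth atLeast0LessThan ys_def)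
  also have "\<dots> = (\<Sum>i<K. g (ys ! i)) + (\<Sum>i\<in>{K..<m}. g (ys ! i))"
  proof -
    have un: "{..<m} = {..<K} \<union> {K..<m}" using K by auto
    show ?thesis unfolding un by (rule sum.union_disjoint) auto
  qed
  also have "(\<Sum>i\<in>{K..<m}. g (ys ! i)) = 0"
  proof (rule sum.neutral, rule ballI)
    fix i assume "i \<in> {K..<m}"
    then have "ys ! i \<le> c" unfolding c_def ys_def[symmetric] using K by (intro mono) auto
    then show "g (ys ! i) = 0" unfolding g_def by simp
  qed
  also have "(\<Sum>i<K. g (ys ! i)) = (\<Sum>i<K. ys ! i - c)"
  proof (rule sum.cong[OF refl])
    fix i assume "i \<in> {..<K}"
    then have "c \<le> ys ! i" unfolding c_def ys_def[symmetric] using K by (intro mono) auto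
    then show "g (ys ! i) = ys ! i - c" unfolding g_def by simp
  qed
  finally show ?thesis
    unfolding sum_largest_def ys_def[symmetric] g_def by (simp add: sum_subtractf)
qed

text \<open>With \<open>c\<close> the \<open>K\<close>-th largest value, \<open>w\<^sub>l b\<^sub>l \<le> w\<^sub>l c + (b\<^sub>l - c)\<^sup>+\<close> termwise.\<close>

lemma weighted_sum_le_sum_largest:
  fixes b w :: "nat \<Rightarrow> real"
  assumes w0: "\<And>l. l < m \<Longrightarrow> 0 \<le> w l" and w1: "\<And>l. l < m \<Longrightarrow> w l \<le> 1"
    and ws: "(\<Sum>l<m. w l) = real K" and K: "K \<le> m"
  shows "(\<Sum>l<m. w l * b l) \<le> sum_largest m b K"
proof (cases "K = 0")
  case True
  then have "\<forall>l\<in>{..<m}. w l = 0" using ws w0 sum_nonneg_eq_0_iff[of "{..<m}" w] by auto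
  then show ?thesis using True by (simp add: sum_largest_def)
next
  case False
  define c where "c = rev (sort (map b [0..<m])) ! (K - 1)"
  have "w l * b l \<le> w l * c + max (b l - c) 0" if l: "l < m" for l
  proof (cases "b l \<ge> c")
    case True
    have "w l * (b l - c) \<le> 1 * (b l - c)" by (rule mult_right_mono) (use w1[OF l] True in auto)
    thus ?thesis using True by (simp add: algebra_simps)
  next
    case False
    have "w l * (b l - c) \<le> 0" by (rule mult_nonneg_nonpos) (use w0[OF l] False in auto)
    thus ?thesis using False by (simp add: algebra_simps)
  qed
  then have "(\<Sum>l<m. w l * b l) \<le> (\<Sum>l<m. w l * c + max (b l - c) 0)" by (intro sum_mono) auto
  also have "\<dots> = real K * c + (\<Sum>l<m. max (b l - c) 0)"
    by (simp add: sum.distrib sum_distrib_right[symmetric] ws)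
  also have "\<dots> = sum_largest m b K"
    using sum_excess_over_kth_largest[OF _ K, of b] False unfolding c_def by simp
  finally show ?thesis .
qed

lemma doubly_stochastic_sum_largest_mono:
  fixes a b :: "nat \<Rightarrow> real" and P :: "nat \<Rightarrow> nat \<Rightarrow> real"
  assumes P0: "\<And>l k. l < m \<Longrightarrow> k < m \<Longrightarrow> 0 \<le> P l k"
    and col: "\<And>k. k < m \<Longrightarrow> (\<Sum>l<m. P l k) = 1"
    and row: "\<And>l. l < m \<Longrightarrow> (\<Sum>k<m. P l k) = 1"
    and dom: "\<And>k. k < m \<Longrightarrow> a k \<le> (\<Sum>l<m. P l k * b l)"
    and K: "K \<le> m"
  shows "sum_largest m a K \<le> sum_largest m b K"
proof -
  obtain S where S: "S \<subseteq> {..<m}" "card S = K" "sum_largest m a K = (\<Sum>k\<in>S. a k)"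
    using sum_largest_eq_sum_subset[OF K] by blast
  define w where "w l = (\<Sum>k\<in>S. P l k)" for l
  have "(\<Sum>k\<in>S. a k) \<le> (\<Sum>k\<in>S. \<Sum>l<m. P l k * b l)" by (rule sum_mono) (use dom S(1) in auto)
  also have "\<dots> = (\<Sum>l<m. w l * b l)"
    unfolding w_def by (subst sum.swap) (simp add: sum_distrib_right)
  also have "\<dots> \<le> sum_largest m b K"
  proof (rule weighted_sum_le_sum_largest[OF _ _ _ K])
    fix l assume l: "l < m"
    show "0 \<le> w l" unfolding w_def using P0 l S(1) by (intro sum_nonneg) auto
    have "w l \<le> (\<Sum>k<m. P l k)" unfolding w_def by (rule sum_mono2) (use S(1) P0 l in auto)
    thus "w l \<le> 1" using row[OF l] by simp
  next
    have "(\<Sum>l<m. w l) = (\<Sum>k\<in>S. \<Sum>l<m. P l k)" unfolding w_def by (rule sum.swap)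
    also have "\<dots> = card S" using col S(1) by (simp add: subset_iff)
    finally show "(\<Sum>l<m. w l) = real K" using S(2) by simp
  qed
  finally show ?thesis using S(3) by simp
qed


section \<open>Loewner order, monotonicity and convexity\<close>

lemma loewner_le_diag_entry:
  assumes le: "loewner_le m A B" and A: "A \<in> carrier_mat m m" and B: "B \<in> carrier_mat m m"
    and U: "U \<in> carrier_mat m m" and k: "k < m"
  shows "Re ((mat_adjoint U * A * U) $$ (k,k)) \<le> Re ((mat_adjoint U * B * U) $$ (k,k))"
proof -
  have "col U k \<in> carrier_vec m" using U k by simp
  then have "0 \<le> Re (conjugate (col U k) \<bullet> ((B - A) *\<^sub>v col U k))"
    using le unfolding loewner_le_def by blast
  also have "conjugate (col U k) \<bullet> ((B - A) *\<^sub>v col U k) = (mat_adjoint U * (B - A) * U) $$ (k,k)"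
    by (rule quadratic_form_col[OF minus_carrier_mat[OF A] U k])
  also have "mat_adjoint U * (B - A) = mat_adjoint U * B - mat_adjoint U * A"
    using mult_minus_distrib_mat[OF mat_adjoint_carrier[OF U] B A] .
  also have "(mat_adjoint U * B - mat_adjoint U * A) * U = mat_adjoint U * B * U - mat_adjoint U * A * U"
    using minus_mult_distrib_mat[OF mult_carrier_mat[OF mat_adjoint_carrier[OF U] B]
        mult_carrier_mat[OF mat_adjoint_carrier[OF U] A] U] .
  finally show ?thesis using U A B k by simp
qed

lemma loewner_le_unitary_diag:
  assumes U: "unitary_mat m U" and V: "unitary_mat m V"
    and le: "loewner_le m (U * real_diag_mat m a * mat_adjoint U) (V * real_diag_mat m b * mat_adjoint V)"
    and k: "k < m"
  shows "a k \<le> (\<Sum>l<m. (cmod ((mat_adjoint V * U) $$ (l,k)))\<^sup>2 * b l)"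
proof -
  note u = unitary_matD[OF U] and v = unitary_matD[OF V]
  have "Re ((mat_adjoint U * (U * real_diag_mat m a * mat_adjoint U) * U) $$ (k,k))
      \<le> Re ((mat_adjoint U * (V * real_diag_mat m b * mat_adjoint V) * U) $$ (k,k))"
    by (rule loewner_le_diag_entry[OF le _ _ u(1) k]) (use u v in auto)
  thus ?thesis
    unfolding unitary_conj_cancel[OF U real_diag_mat_carrier]
      unitary_conj_change_basis[OF U V real_diag_mat_carrier]
      diag_entry_conj_real_diag[OF mult_carrier_mat[OF v(2) u(1)] k]
    using k by simp
qed

lemma sep_increasing_on_box_mono:
  fixes f :: "real ^ 'n::finite \<Rightarrow> real" and I :: "'n \<Rightarrow> real set" and v w :: "real ^ 'n"
  assumes incr: "sep_increasing_on {v. \<forall>i. v $ i \<in> I i} f"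
    and v: "\<forall>i. v $ i \<in> I i" and w: "\<forall>i. w $ i \<in> I i" and le: "\<forall>i. v $ i \<le> w $ i"
  shows "f v \<le> f w"
proof -
  define u :: "'n set \<Rightarrow> real ^ 'n" where "u J = (\<chi> i. if i \<in> J then w $ i else v $ i)" for J
  have u_box: "\<forall>i. u J $ i \<in> I i" for J unfolding u_def using v w by simp
  have "f v \<le> f (u J)" if "finite J" for J
    using that
  proof (induction J rule: finite_induct)
    case empty
    have "u {} = v" unfolding u_def by (simp add: vec_eq_iff)
    then show ?case by simp
  next
    case (insert j J)
    have "(\<forall>j'. j' \<noteq> j \<longrightarrow> u J $ j' = u (insert j J) $ j') \<and> u J $ j \<le> u (insert j J) $ j"
      unfolding u_def using insert.hyps(2) le by simp
    then have "f (u J) \<le> f (u (insert j J))"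
      using incr u_box[of J] u_box[of "insert j J"] unfolding sep_increasing_on_def by blast
    then show ?case using insert.IH by linarith
  qed
  moreover have "u UNIV = w" unfolding u_def by (simp add: vec_eq_iff)
  ultimately show ?thesis by (metis finite_class.finite_UNIV)
qed

lemma convex_sep_increasing_le_average:
  fixes f :: "real ^ 'n::finite \<Rightarrow> real" and I :: "'n \<Rightarrow> real set"
    and u :: "real ^ 'n" and v :: "'a \<Rightarrow> real ^ 'n"
  assumes convex: "convex_on {v. \<forall>i. v $ i \<in> I i} f"
    and incr: "sep_increasing_on {v. \<forall>i. v $ i \<in> I i} f"
    and u: "\<forall>i. u $ i \<in> I i" and v: "\<And>l. l \<in> L \<Longrightarrow> \<forall>i. v l $ i \<in> I i"
    and L: "finite L" and p0: "\<And>l. l \<in> L \<Longrightarrow> 0 \<le> p l" and p1: "(\<Sum>l\<in>L. p l) = 1"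
    and dom: "\<And>i. u $ i \<le> (\<Sum>l\<in>L. p l * v l $ i)"
  shows "f u \<le> (\<Sum>l\<in>L. p l * f (v l))"
proof -
  have "convex {v. \<forall>i. v $ i \<in> I i}" using convex unfolding convex_on_def by simp
  then have "(\<Sum>l\<in>L. p l *\<^sub>R v l) \<in> {v. \<forall>i. v $ i \<in> I i}"
    by (rule convex_sum[OF L _ p1]) (use p0 v in auto)
  then have "f u \<le> f (\<Sum>l\<in>L. p l *\<^sub>R v l)"
    by (intro sep_increasing_on_box_mono[OF incr u]) (use dom in auto)
  also have "\<dots> \<le> (\<Sum>l\<in>L. p l * f (v l))"
    using p1 by (intro convex_on_sum[OF L _ convex p1]) (use p0 v in auto)
  finally show ?thesis .
qed

theorem mainTheorem8:
  fixes I :: "'n::finite \<Rightarrow> real set"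
    and f :: "real ^ 'n \<Rightarrow> real"
    and m :: nat
    and x y :: "'n \<Rightarrow> complex mat"
  assumes intervals: "\<And>i. is_interval (I i)"
    and convex: "convex_on {v. \<forall>i. v $ i \<in> I i} f"
    and incr: "sep_increasing_on {v. \<forall>i. v $ i \<in> I i} f"
    and sa_x: "\<And>i. self_adjoint m (x i)"
    and sa_y: "\<And>i. self_adjoint m (y i)"
    and ab_x: "abelian_tuple x"
    and ab_y: "abelian_tuple y"
    and spec_x: "\<And>i. spectrum (x i) \<subseteq> complex_of_real ` I i"
    and spec_y: "\<And>i. spectrum (y i) \<subseteq> complex_of_real ` I i"
    and le: "\<And>i. loewner_le m (x i) (y i)"
  shows "weak_majorized m (joint_fc m f x) (joint_fc m f y)"
proof -
  obtain U and \<Lambda> :: "nat \<Rightarrow> real ^ 'n" where U: "unitary_mat m U"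
    and xU: "\<And>i. x i = U * real_diag_mat m (\<lambda>k. \<Lambda> k $ i) * mat_adjoint U"
    using simultaneous_unitary_diagonalization[OF sa_x ab_x] by blast
  obtain V and \<Gamma> :: "nat \<Rightarrow> real ^ 'n" where V: "unitary_mat m V"
    and yV: "\<And>i. y i = V * real_diag_mat m (\<lambda>k. \<Gamma> k $ i) * mat_adjoint V"
    using simultaneous_unitary_diagonalization[OF sa_y ab_y] by blast
  note box_x = unitary_diag_entries_in_box[OF U xU spec_x]
    and box_y = unitary_diag_entries_in_box[OF V yV spec_y]
  define P where "P l k = (cmod ((mat_adjoint V * U) $$ (l,k)))\<^sup>2" for l k
  have P0: "0 \<le> P l k" for l k unfolding P_def by simp
  have col: "(\<Sum>l<m. P l k) = 1" if "k < m" for k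
    unfolding P_def using unitary_col_norm_sum[OF unitary_adjoint_mult[OF V U] that] .
  have row: "(\<Sum>k<m. P l k) = 1" if "l < m" for l
    unfolding P_def using unitary_row_norm_sum[OF unitary_adjoint_mult[OF V U] that] .
  have dom: "f (\<Lambda> k) \<le> (\<Sum>l<m. P l k * f (\<Gamma> l))" if k: "k < m" for k
  proof (rule convex_sep_increasing_le_average[OF convex incr box_x[OF k] _ finite_lessThan P0 col[OF k]])
    show "\<forall>i. \<Gamma> l $ i \<in> I i" if "l \<in> {..<m}" for l using box_y that by simp
    show "\<Lambda> k $ i \<le> (\<Sum>l<m. P l k * \<Gamma> l $ i)" for i
      using loewner_le_unitary_diag[OF U V le[of i, unfolded xU yV] k] unfolding P_def .
  qed
  show ?thesis
    unfolding joint_fc_unitary_diag[OF U xU] joint_fc_unitary_diag[OF V yV]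
    by (rule weak_majorized_unitary_diag[OF U V doubly_stochastic_sum_largest_mono[OF P0 col row dom]])
qed

end
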